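(* Let $\lambda>0$, $r\in(0,1)$, $U(w)=-e^{-\lambda w}$, and $\hat m_{\lambda,r}=\frac{r e^{\lambda}}{re^{\lambda}+1-r}$. For every $m\in[\hat m_{\lambda,r},1)$ and every $v\in[0,D(m)]$, if $X$ has distribution function $F_{m,v}$, then $\gamma=1$ maximizes $\mathbb E\,U(1+r+\gamma(X-r))$ over $\gamma\in[0,1]$; i.e. $\gamma^*_{\lambda,r}(m,v)=1$.
   Context: $D(m)=m-m^2$. For $0<v<D(m)$, $F_{m,v}$ is the distribution function of the Beta law with mean $m$ and variance $v$, i.e. Beta$(\alpha,\beta)$ with $\alpha=\frac{m(m-m^2-v)}{v}$, $\beta=\frac{(1-m)(m-m^2-v)}{v}$; $F_{m,0}$ is the distribution function of the Dirac mass at $m$; $F_{m,D(m)}(x)=1-m$ for $0\le x<1$ and $F_{m,D(m)}(1)=1$ (Bernoulli law with parameter $m$). Initial wealth is normalized to 1; $\gamma$ is the fraction invested in the risky return $X$, the rest earning the risk-free return $r$. *)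

theory Defs
  imports "HOL-Probability.Probability"
begin

definition D :: "real \<Rightarrow> real" where
  "D m = m - m^2"

definition beta_alpha :: "real \<Rightarrow> real \<Rightarrow> real" where
  "beta_alpha m v = m * (m - m^2 - v) / v"

definition beta_beta :: "real \<Rightarrow> real \<Rightarrow> real" where
  "beta_beta m v = (1 - m) * (m - m^2 - v) / v"

definition beta_density :: "real \<Rightarrow> real \<Rightarrow> real \<Rightarrow> real" where
  "beta_density a b x =
     (if 0 < x \<and> x < 1 then x powr (a - 1) * (1 - x) powr (b - 1) / Beta a b else 0)"

text \<open>The probability law whose distribution function is F_{m,v}:
  Dirac at m if v = 0, Bernoulli(m) on {0,1} if v = D m, and the Beta law with
  mean m and variance v if 0 < v < D m.\<close>
definition law_F :: "real \<Rightarrow> real \<Rightarrow> real measure" where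
  "law_F m v =
     (if v = 0 then return borel m
      else if v = D m then distr (measure_pmf (bernoulli_pmf m)) borel (\<lambda>b. if b then 1 else 0)
      else density lborel (beta_density (beta_alpha m v) (beta_beta m v)))"

definition U :: "real \<Rightarrow> real \<Rightarrow> real" where
  "U lam w = - exp (- lam * w)"

definition m_hat :: "real \<Rightarrow> real \<Rightarrow> real" where
  "m_hat lam r = r * exp lam / (r * exp lam + 1 - r)"

end

theory Submission imports Defs begin

text \<open>The expected utility is concave in \<gamma>, so its tangent at \<gamma> = 1 bounds it from above:
  \<open>E U(\<gamma>) \<le> E U(1) + (\<gamma> - 1) \<lambda> e\<^sup>-\<^sup>\<lambda> E[(X - r) e\<^sup>-\<^sup>\<lambda>\<^sup>X]\<close>.
  It remains to see that the marginal gain \<open>E[(X - r) e\<^sup>-\<^sup>\<lambda>\<^sup>X]\<close> is nonnegative.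
  On [0,1] the function \<open>(x - r) e\<^sup>-\<^sup>\<lambda>\<^sup>x\<close> lies above its chord, whose expectation
  \<open>-r + m (r + (1 - r) e\<^sup>-\<^sup>\<lambda>)\<close> is nonnegative precisely when \<open>m \<ge> m_hat \<lambda> r\<close>.
  Hence only two features of F_{m,v} matter: it is supported in [0,1] and has mean m.\<close>

lemma Beta_real_pos: "a > 0 \<Longrightarrow> b > (0::real) \<Longrightarrow> Beta a b > 0"
  by (simp add: Beta_altdef rGamma_inverse_Gamma Gamma_real_pos)

lemma borel_measurable_beta_density [measurable]: "beta_density a b \<in> borel_measurable borel"
  unfolding beta_density_def by measurable

lemma mean_beta_law:
  fixes a b :: real
  assumes a: "a > 0" and b: "b > 0"
  shows "integral\<^sup>L (density lborel (beta_density a b)) (\<lambda>x. x) = a / (a + b)"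
proof -
  have B: "Beta a b > 0" using Beta_real_pos a b by blast
  have "integral\<^sup>L (density lborel (beta_density a b)) (\<lambda>x. x)
      = (LINT x|lborel. beta_density a b x *\<^sub>R x)"
    using B by (intro integral_density) (auto simp: beta_density_def)
  also have "\<dots> = (LINT x:{0..1}|lborel. x powr ((a + 1) - 1) * (1 - x) powr (b - 1)) / Beta a b"
  proof -
    have "beta_density a b x *\<^sub>R x
        = indicator {0..1} x *\<^sub>R (x powr ((a + 1) - 1) * (1 - x) powr (b - 1)) / Beta a b" for x
      using a by (auto simp: beta_density_def indicator_def powr_add[symmetric] powr_diff)
    then show ?thesis unfolding set_lebesgue_integral_def by simp
  qed
  also have "\<dots> = Beta (a + 1) b / Beta a b"
    using integrable_Beta[of "a + 1" b] has_integral_Beta_real[of "a + 1" b] a b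
    by (simp add: set_borel_integral_eq_integral integral_unique)
  also have "\<dots> = a / (a + b)"
  proof -
    have "a \<notin> \<int>\<^sub>\<le>\<^sub>0" using a nonpos_Ints_nonpos by fastforce
    from Beta_plus1_left[OF this, of b] have "(a + b) * Beta (a + 1) b = a * Beta a b" .
    then show ?thesis using a b B by (simp add: field_simps)
  qed
  finally show ?thesis .
qed

lemma D_eq: "D m = m * (1 - m)"
  by (simp add: D_def power2_eq_square algebra_simps)

lemma unit_interval_if_D_pos: "0 < D m \<Longrightarrow> 0 < m \<and> m < 1"
  by (auto simp: D_eq zero_less_mult_iff)

lemma unit_interval_if_D_nonneg: "0 \<le> D m \<Longrightarrow> 0 \<le> m \<and> m \<le> 1"
  by (auto simp: D_eq zero_le_mult_iff)

lemma beta_parameters: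
  assumes "0 < v" "v < D m"
  shows "beta_alpha m v > 0" "beta_beta m v > 0"
    and "beta_alpha m v / (beta_alpha m v + beta_beta m v) = m"
proof -
  define K where "K = (m - m^2 - v) / v"
  have K: "K > 0" using assms by (simp add: K_def D_def)
  have m: "0 < m" "m < 1" using unit_interval_if_D_pos assms by force+
  have "beta_alpha m v = m * K" "beta_beta m v = (1 - m) * K"
    by (simp_all add: beta_alpha_def beta_beta_def K_def)
  moreover have "0 < (1 - m) * K" using K m by simp
  ultimately show "beta_alpha m v > 0" "beta_beta m v > 0"
    and "beta_alpha m v / (beta_alpha m v + beta_beta m v) = m"
    using K m by (simp_all, simp add: field_simps)
qed

lemma AE_law_F_unit_interval:
  assumes "0 \<le> v" "v \<le> D m"
  shows "AE x in law_F m v. 0 \<le> x \<and> x \<le> 1"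
  using unit_interval_if_D_nonneg[of m] assms
  unfolding law_F_def by (auto simp: AE_distr_iff AE_density AE_return beta_density_def)

lemma mean_law_F:
  assumes "0 \<le> v" "v \<le> D m"
  shows "integral\<^sup>L (law_F m v) (\<lambda>x. x) = m"
proof -
  have m: "0 \<le> m" "m \<le> 1" using unit_interval_if_D_nonneg[of m] assms by auto
  consider "v = 0" | "v \<noteq> 0" "v = D m" | "0 < v" "v < D m"
    using assms by linarith
  then show ?thesis
  proof cases
    case 1
    then show ?thesis by (simp add: law_F_def integral_return)
  next
    case 2
    then show ?thesis
      using m by (simp add: law_F_def integral_distr integral_measure_pmf_real[where A=UNIV] UNIV_bool)
  next
    case 3
    then show ?thesis
      using mean_beta_law[OF beta_parameters(1,2)] beta_parameters(3) by (simp add: law_F_def)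
  qed
qed

lemma U_tangent_bound:
  "U lam (1 + r + g * (x - r))
     \<le> U lam (1 + x) + (g - 1) * (lam * exp (- lam)) * ((x - r) * exp (- lam * x))"
proof -
  define E where "E = exp (- lam) * exp (- lam * x)"
  define t where "t = lam * (1 - g) * (x - r)"
  have "exp (- lam * (1 + r + g * (x - r))) = E * exp t"
    by (simp add: E_def t_def flip: exp_add) (simp add: algebra_simps)
  moreover have "E * (1 + t) \<le> E * exp t"
    by (intro mult_left_mono exp_ge_add_one_self) (simp add: E_def)
  moreover have "exp (- lam * (1 + x)) = E"
    by (simp add: E_def flip: exp_add) (simp add: algebra_simps)
  ultimately show ?thesis by (simp add: U_def E_def t_def algebra_simps)
qed

lemma tilted_excess_return_above_chord:
  fixes lam r x :: real
  assumes "lam > 0" "0 < r" "r < 1" "0 \<le> x" "x \<le> 1"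
  shows "- r + x * (r + (1 - r) * exp (- lam)) \<le> (x - r) * exp (- lam * x)"
proof -
  have "exp (- lam * x) \<le> 1" "exp (- lam) \<le> exp (- lam * x)"
    using assms by (simp_all add: mult_left_le)
  then have "0 \<le> x * (1 - r) * (exp (- lam * x) - exp (- lam)) + r * (1 - x) * (1 - exp (- lam * x))"
    using assms by (intro add_nonneg_nonneg mult_nonneg_nonneg) auto
  also have "\<dots> = (x - r) * exp (- lam * x) - (- r + x * (r + (1 - r) * exp (- lam)))"
    by (simp add: algebra_simps)
  finally show ?thesis by simp
qed

lemma m_hat_denominator_pos: "(0::real) < r \<Longrightarrow> r < 1 \<Longrightarrow> 0 < r * exp lam + 1 - r"
  by (smt (verit) exp_gt_zero mult_pos_pos)

lemma m_hat_pos: "(0::real) < r \<Longrightarrow> r < 1 \<Longrightarrow> 0 < m_hat lam r"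
  using m_hat_denominator_pos by (simp add: m_hat_def)

lemma chord_mean_nonneg_if_m_hat_le:
  fixes lam r m :: real
  assumes "0 < r" "r < 1" "m_hat lam r \<le> m"
  shows "0 \<le> - r + m * (r + (1 - r) * exp (- lam))"
proof -
  have den: "r * exp lam + 1 - r > 0" using assms m_hat_denominator_pos by blast
  have "r * exp lam \<le> m * (r * exp lam + 1 - r)"
    using assms(3) den by (simp add: m_hat_def divide_le_eq)
  then have "r * exp lam * exp (- lam) \<le> m * (r * exp lam + 1 - r) * exp (- lam)"
    by simp
  then show ?thesis by (simp add: algebra_simps flip: exp_add)
qed

lemma (in prob_space) full_investment_optimal:
  fixes X :: "'a \<Rightarrow> real"
  assumes lam: "lam > 0" and r: "0 < r" "r < 1"
    and X[measurable]: "X \<in> borel_measurable M"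
    and X01: "AE \<omega> in M. 0 \<le> X \<omega> \<and> X \<omega> \<le> 1"
    and mean: "m_hat lam r \<le> expectation X"
    and g: "0 \<le> g" "g \<le> 1"
  shows "(\<integral>\<omega>. U lam (1 + r + g * (X \<omega> - r)) \<partial>M) \<le> (\<integral>\<omega>. U lam (1 + X \<omega>) \<partial>M)"
proof -
  define G where "G = (\<lambda>\<omega>. (X \<omega> - r) * exp (- lam * X \<omega>))"
  define c where "c = r + (1 - r) * exp (- lam)"
  have bounded: "AE \<omega> in M. \<bar>X \<omega>\<bar> \<le> 1 \<and> \<bar>G \<omega>\<bar> \<le> 1
      \<and> \<bar>U lam (1 + X \<omega>)\<bar> \<le> 1 \<and> \<bar>U lam (1 + r + g * (X \<omega> - r))\<bar> \<le> 1"
    using X01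
  proof eventually_elim
    case (elim \<omega>)
    have "\<bar>X \<omega> - r\<bar> * exp (- lam * X \<omega>) \<le> 1 * 1"
      using elim lam r by (intro mult_mono) auto
    moreover have "g * r \<le> r" "0 \<le> g * X \<omega>"
      using elim r g by (simp_all add: mult_left_le_one_le)
    then have "0 \<le> 1 + r + g * (X \<omega> - r)" by (simp add: algebra_simps)
    ultimately show ?case using elim lam by (simp add: G_def U_def abs_mult)
  qed
  have intX: "integrable M X" and intG: "integrable M G"
    and intU1: "integrable M (\<lambda>\<omega>. U lam (1 + X \<omega>))"
    and intUg: "integrable M (\<lambda>\<omega>. U lam (1 + r + g * (X \<omega> - r)))"
    by (auto intro!: integrable_const_bound[where B = 1] eventually_mono[OF bounded]
        simp: G_def U_def)
  have "0 \<le> - r + expectation X * c"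
    using chord_mean_nonneg_if_m_hat_le[OF r] mean m_hat_pos[OF r] by (simp add: c_def)
  also have "\<dots> = (\<integral>\<omega>. - r + X \<omega> * c \<partial>M)"
    using intX by (simp add: prob_space)
  also have "\<dots> \<le> expectation G"
    using X01 tilted_excess_return_above_chord[OF lam r] intX intG
    by (intro integral_mono_AE) (auto simp: G_def c_def)
  finally have "(g - 1) * (lam * exp (- lam)) * expectation G \<le> 0"
    using g lam by (intro mult_nonpos_nonneg) (auto simp: mult_nonpos_nonneg)
  moreover have "(\<integral>\<omega>. U lam (1 + r + g * (X \<omega> - r)) \<partial>M)
      \<le> (\<integral>\<omega>. U lam (1 + X \<omega>) + (g - 1) * (lam * exp (- lam)) * G \<omega> \<partial>M)"
    using intUg intU1 intG by (intro integral_mono) (simp_all add: G_def U_tangent_bound[unfolded mult_minus_left])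
  ultimately show ?thesis
    using intU1 intG by simp
qed

theorem proposition8:
  fixes lam r m v :: real and M :: "'a measure" and X :: "'a \<Rightarrow> real"
  assumes "lam > 0" and "0 < r" and "r < 1"
    and "m_hat lam r \<le> m" and "m < 1"
    and "0 \<le> v" and "v \<le> D m"
    and "prob_space M" and "X \<in> borel_measurable M"
    and "distr M borel X = law_F m v"
  shows "\<forall>\<gamma>\<in>{0..1::real}.
           (\<integral>\<omega>. U lam (1 + r + \<gamma> * (X \<omega> - r)) \<partial>M)
             \<le> (\<integral>\<omega>. U lam (1 + r + 1 * (X \<omega> - r)) \<partial>M)"
proof
  fix \<gamma> :: real assume "\<gamma> \<in> {0..1}"
  interpret prob_space M by fact
  have "AE x in distr M borel X. 0 \<le> x \<and> x \<le> 1"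
    unfolding \<open>distr M borel X = law_F m v\<close> using AE_law_F_unit_interval assms by blast
  then have "AE \<omega> in M. 0 \<le> X \<omega> \<and> X \<omega> \<le> 1"
    using assms by (simp add: AE_distr_iff)
  moreover have "expectation X = m"
    using integral_distr[of X M borel "\<lambda>x. x"] mean_law_F assms by simp
  ultimately show "(\<integral>\<omega>. U lam (1 + r + \<gamma> * (X \<omega> - r)) \<partial>M)
      \<le> (\<integral>\<omega>. U lam (1 + r + 1 * (X \<omega> - r)) \<partial>M)"
    using full_investment_optimal[of lam r X \<gamma>] assms \<open>\<gamma> \<in> {0..1}\<close> by simp
qed

end
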